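(* Let $\mathcal{D}_{\text{SEQ}}$ be a temporal sequence database with support threshold $\sigma$ and confidence threshold $\delta$. Let $N_{k-1}=(E_1,\dots,E_{k-1})$ be a frequent $(k-1)$-event combination and $E_k$ a frequent single event, and let $N_k=N_{k-1}\cup E_k$. Then $N_k$ can form frequent $k$-event temporal patterns only if for every $E_i\in N_{k-1}$ there exists $r\in\{\text{Follows},\text{Contains},\text{Overlaps}\}$ such that $r(E_i,E_k)$ is a frequent temporal relation.
   Context: A temporal event is $E=(\omega,T)$ (symbol and set of intervals), with instances $(\omega,[t_s,t_e])$. $\mathcal{D}_{\text{SEQ}}$ is a finite collection of temporal sequences (lists of instances ordered by start time). A $k$-event temporal pattern over events $E_1,\dots,E_k$ is a list of the $\tfrac12k(k-1)$ triples $(r_{ij},E_i,E_j)$, $r_{ij}\in\{\text{Follows},\text{Contains},\text{Overlaps}\}$. A sequence supports a pattern iff it has at least two instances and each triple's relation holds between some instances of the two events in it. Supports count sequences: $\textit{supp}$ of an event (group) is the number of sequences containing an instance of each event, $\textit{supp}(P)$ the number of sequences supporting $P$; $\textit{conf}(P)=\textit{supp}(P)/\max_{E_k\in P}\textit{supp}(E_k)$. An event, event combination, relation (viewed as a 2-event pattern $(r,E_i,E_k)$) or pattern is frequent if its support is at least $\sigma$ (and, for combinations/patterns, its confidence is at least $\delta$). *)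

theory Defs
  imports Main "HOL.Real"
begin

datatype trel = Follows | Contains | Overlaps

type_synonym 'a inst = "'a \<times> (real \<times> real)"
type_synonym 'a tseq = "'a inst list"
type_synonym 'a tdb = "'a tseq list"

fun tholds :: "trel \<Rightarrow> real \<times> real \<Rightarrow> real \<times> real \<Rightarrow> bool" where
  "tholds Follows (ts1, te1) (ts2, te2) = (te1 \<le> ts2)"
| "tholds Contains (ts1, te1) (ts2, te2) = (ts1 \<le> ts2 \<and> te2 \<le> te1)"
| "tholds Overlaps (ts1, te1) (ts2, te2) = (ts1 < ts2 \<and> ts2 < te1 \<and> te1 < te2)"

definition valid_seq :: "'a tseq \<Rightarrow> bool" where
  "valid_seq S \<longleftrightarrow> (\<forall>x\<in>set S. fst (snd x) \<le> snd (snd x)) \<and> sorted (map (\<lambda>x. fst (snd x)) S)"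

definition valid_db :: "'a tdb \<Rightarrow> bool" where
  "valid_db D \<longleftrightarrow> (\<forall>S\<in>set D. valid_seq S)"

definition occurs :: "'a \<Rightarrow> 'a tseq \<Rightarrow> bool" where
  "occurs e S \<longleftrightarrow> (\<exists>x\<in>set S. fst x = e)"

definition rel_holds_in :: "'a tseq \<Rightarrow> trel \<Rightarrow> 'a \<Rightarrow> 'a \<Rightarrow> bool" where
  "rel_holds_in S r a b \<longleftrightarrow>
     (\<exists>x\<in>set S. \<exists>y\<in>set S. fst x = a \<and> fst y = b \<and> tholds r (snd x) (snd y))"

type_synonym 'a pattern = "(trel \<times> 'a \<times> 'a) list"

definition pattern_over :: "'a list \<Rightarrow> (nat \<Rightarrow> nat \<Rightarrow> trel) \<Rightarrow> 'a pattern" where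
  "pattern_over es R = [(R i j, es ! i, es ! j). j \<leftarrow> [0..<length es], i \<leftarrow> [0..<j]]"

definition supports :: "'a tseq \<Rightarrow> 'a pattern \<Rightarrow> bool" where
  "supports S P \<longleftrightarrow> 2 \<le> length S \<and> (\<forall>(r, a, b)\<in>set P. rel_holds_in S r a b)"

definition pat_events :: "'a pattern \<Rightarrow> 'a set" where
  "pat_events P = (\<Union>(r, a, b)\<in>set P. {a, b})"

definition supp_ev :: "'a tdb \<Rightarrow> 'a \<Rightarrow> nat" where
  "supp_ev D e = length (filter (occurs e) D)"

definition supp_comb :: "'a tdb \<Rightarrow> 'a list \<Rightarrow> nat" where
  "supp_comb D es = length (filter (\<lambda>S. \<forall>e\<in>set es. occurs e S) D)"

definition conf_comb :: "'a tdb \<Rightarrow> 'a list \<Rightarrow> real" where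
  "conf_comb D es = real (supp_comb D es) / real (Max (supp_ev D ` set es))"

definition supp_pat :: "'a tdb \<Rightarrow> 'a pattern \<Rightarrow> nat" where
  "supp_pat D P = length (filter (\<lambda>S. supports S P) D)"

definition conf_pat :: "'a tdb \<Rightarrow> 'a pattern \<Rightarrow> real" where
  "conf_pat D P = real (supp_pat D P) / real (Max (supp_ev D ` pat_events P))"

definition frequent_event :: "'a tdb \<Rightarrow> nat \<Rightarrow> 'a \<Rightarrow> bool" where
  "frequent_event D \<sigma> e \<longleftrightarrow> \<sigma> \<le> supp_ev D e"

definition frequent_comb :: "'a tdb \<Rightarrow> nat \<Rightarrow> real \<Rightarrow> 'a list \<Rightarrow> bool" where
  "frequent_comb D \<sigma> \<delta> es \<longleftrightarrow> \<sigma> \<le> supp_comb D es \<and> \<delta> \<le> conf_comb D es"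

definition frequent_pat :: "'a tdb \<Rightarrow> nat \<Rightarrow> real \<Rightarrow> 'a pattern \<Rightarrow> bool" where
  "frequent_pat D \<sigma> \<delta> P \<longleftrightarrow> \<sigma> \<le> supp_pat D P \<and> \<delta> \<le> conf_pat D P"

definition frequent_rel :: "'a tdb \<Rightarrow> nat \<Rightarrow> real \<Rightarrow> trel \<Rightarrow> 'a \<Rightarrow> 'a \<Rightarrow> bool" where
  "frequent_rel D \<sigma> \<delta> r a b \<longleftrightarrow> frequent_pat D \<sigma> \<delta> [(r, a, b)]"

end

theory Submission
  imports Defs
begin

(* Frequency of temporal patterns is anti-monotone, as in Apriori: a sequence supporting a
pattern supports each of its sub-patterns, and a sub-pattern has fewer events, so both its
support and its confidence can only grow. Each relation r(E_i, E_k) of a k-event pattern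
over N_k is a one-triple sub-pattern, hence frequent whenever the pattern is. *)

lemma length_filter_mono:
  assumes "\<And>x. P x \<Longrightarrow> Q x"
  shows "length (filter P xs) \<le> length (filter Q xs)"
  using assms by (induction xs) auto

lemma pattern_over_triple:
  assumes "i < j" and "j < length es"
  shows "(R i j, es ! i, es ! j) \<in> set (pattern_over es R)"
  using assms unfolding pattern_over_def by (auto intro!: bexI[of _ j])

lemma pat_events_mono: "set Q \<subseteq> set P \<Longrightarrow> pat_events Q \<subseteq> pat_events P"
  unfolding pat_events_def by blast

lemma finite_pat_events: "finite (pat_events P)"
  unfolding pat_events_def by auto

lemma supports_subpattern:
  "supports S P \<Longrightarrow> set Q \<subseteq> set P \<Longrightarrow> supports S Q"
  unfolding supports_def by blast

lemma supports_occurs: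
  "supports S P \<Longrightarrow> e \<in> pat_events P \<Longrightarrow> occurs e S"
  unfolding supports_def pat_events_def rel_holds_in_def occurs_def by fastforce

lemma supp_pat_antimono:
  "set Q \<subseteq> set P \<Longrightarrow> supp_pat D P \<le> supp_pat D Q"
  unfolding supp_pat_def by (rule length_filter_mono) (rule supports_subpattern)

lemma supp_pat_le_supp_ev:
  "e \<in> pat_events P \<Longrightarrow> supp_pat D P \<le> supp_ev D e"
  unfolding supp_pat_def supp_ev_def by (rule length_filter_mono) (rule supports_occurs)

lemma conf_pat_antimono:
  assumes sub: "set Q \<subseteq> set P" and "Q \<noteq> []"
  shows "conf_pat D P \<le> conf_pat D Q"
proof -
  let ?mQ = "Max (supp_ev D ` pat_events Q)" and ?mP = "Max (supp_ev D ` pat_events P)"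
  have supp: "supp_pat D P \<le> supp_pat D Q" using sub by (rule supp_pat_antimono)
  obtain e where e: "e \<in> pat_events Q"
    using \<open>Q \<noteq> []\<close> by (cases Q) (auto simp: pat_events_def)
  have max: "?mQ \<le> ?mP"
    using e pat_events_mono[OF sub] finite_pat_events by (intro Max_mono) auto
  show ?thesis
  proof (cases "?mQ = 0")
    case True
    have "supp_pat D Q \<le> ?mQ"
      using supp_pat_le_supp_ev[OF e] e finite_pat_events by (meson Max_ge finite_imageI image_eqI le_trans)
    then have "supp_pat D P = 0" using True supp by simp
    then show ?thesis by (simp add: conf_pat_def)
  next
    case False
    have "real (supp_pat D P) / real ?mP \<le> real (supp_pat D Q) / real ?mP"
      using supp by (simp add: divide_right_mono)
    also have "\<dots> \<le> real (supp_pat D Q) / real ?mQ"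
      using False max by (intro divide_left_mono) auto
    finally show ?thesis by (simp add: conf_pat_def)
  qed
qed

lemma frequent_pat_subpattern:
  "frequent_pat D \<sigma> \<delta> P \<Longrightarrow> set Q \<subseteq> set P \<Longrightarrow> Q \<noteq> [] \<Longrightarrow> frequent_pat D \<sigma> \<delta> Q"
  unfolding frequent_pat_def
  using supp_pat_antimono[of Q P D] conf_pat_antimono[of Q P D] by linarith

lemma frequent_rel_of_triple:
  "frequent_pat D \<sigma> \<delta> P \<Longrightarrow> (r, a, b) \<in> set P \<Longrightarrow> frequent_rel D \<sigma> \<delta> r a b"
  unfolding frequent_rel_def by (rule frequent_pat_subpattern) auto

theorem lemma5:
  fixes D :: "'a tdb" and \<sigma> :: nat and \<delta> :: real
    and Ns :: "'a list" and Ek :: 'a and R :: "nat \<Rightarrow> nat \<Rightarrow> trel"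
  assumes "valid_db D"
    and "distinct (Ns @ [Ek])"
    and "frequent_comb D \<sigma> \<delta> Ns"
    and "frequent_event D \<sigma> Ek"
    and "frequent_pat D \<sigma> \<delta> (pattern_over (Ns @ [Ek]) R)"
  shows "\<forall>Ei\<in>set Ns. \<exists>r. frequent_rel D \<sigma> \<delta> r Ei Ek"
proof
  fix Ei assume "Ei \<in> set Ns"
  then obtain i where i: "i < length Ns" and Ei: "Ei = Ns ! i"
    by (auto simp: in_set_conv_nth)
  have "(R i (length Ns), Ei, Ek) \<in> set (pattern_over (Ns @ [Ek]) R)"
    using pattern_over_triple[of i "length Ns" "Ns @ [Ek]" R] i Ei by (simp add: nth_append)
  then show "\<exists>r. frequent_rel D \<sigma> \<delta> r Ei Ek"
    using frequent_rel_of_triple[OF assms(5)] by blast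
qed

end
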